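(* Let $\sigma=(\sigma_j)_{j=1}^\infty$ be a strictly decreasing sequence of real numbers with $\sigma_j\to0$, and let $\mathcal{K}(\sigma)=\{\sigma_je_j\}_{j=1}^\infty\cup\{0\}\subset c_0$. Let $n\ge1$ and $\gamma>0$. If $\sigma_1\le\gamma/2$ and there is $N\in\mathbb{N}\cup\{\infty\}$ such that $\sum_{j=1}^N\sigma_j^n\le(\gamma/2)^n$, then $d_n^\gamma(\mathcal{K}(\sigma))_{c_0}\le\sigma_N$, where $\sigma_\infty:=0$.
   Context: $c_0$ denotes the Banach space of real sequences converging to $0$ with the norm $\|x\|=\sup_j|x_j|$, and $(e_j)$ is its standard unit vector basis. For $k\ge1$ and a norm $\|\cdot\|_{Y_k}$ on $\mathbb{R}^k$ let $B_{Y_k}=\{y\in\mathbb{R}^k:\|y\|_{Y_k}\le1\}$. For $\mathcal{K}\subset c_0$ and $\gamma\ge0$, $d^\gamma(\mathcal{K},Y_k)_{c_0}=\inf_{\Phi}\sup_{f\in\mathcal{K}}\inf_{y\in B_{Y_k}}\|f-\Phi(y)\|$, the infimum over all maps $\Phi:B_{Y_k}\to c_0$ with $\|\Phi(y)-\Phi(y')\|\le\gamma\|y-y'\|_{Y_k}$ for all $y,y'\in B_{Y_k}$, and the Lipschitz width is $d_n^\gamma(\mathcal{K})_{c_0}=\inf_{1\le k\le n}\inf_{\|\cdot\|_{Y_k}}d^\gamma(\mathcal{K},Y_k)_{c_0}$, the inner infimum over all norms on $\mathbb{R}^k$. *)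

theory Defs
  imports "HOL-Analysis.Analysis"
begin

text \<open>The space c_0, realised as real sequences indexed by nat (index i corresponds
  to the paper's coordinate i+1) converging to 0, with the sup norm.\<close>

definition c0 :: "(nat \<Rightarrow> real) set" where
  "c0 = {x. x \<longlonglongrightarrow> 0}"

definition c0norm :: "(nat \<Rightarrow> real) \<Rightarrow> real" where
  "c0norm x = (SUP j. \<bar>x j\<bar>)"

text \<open>Standard unit vector basis (0-based: unitvec j is the paper's e_(j+1)).\<close>
definition unitvec :: "nat \<Rightarrow> nat \<Rightarrow> real" where
  "unitvec j = (\<lambda>i. if i = j then 1 else 0)"

definition Rk :: "nat \<Rightarrow> (nat \<Rightarrow> real) set" where
  "Rk k = {y. \<forall>i\<ge>k. y i = 0}"

definition is_norm_on :: "nat \<Rightarrow> ((nat \<Rightarrow> real) \<Rightarrow> real) \<Rightarrow> bool" where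
  "is_norm_on k Nm \<longleftrightarrow>
     (\<forall>y\<in>Rk k. 0 \<le> Nm y) \<and>
     (\<forall>y\<in>Rk k. Nm y = 0 \<longleftrightarrow> y = (\<lambda>i. 0)) \<and>
     (\<forall>y\<in>Rk k. \<forall>c::real. Nm (\<lambda>i. c * y i) = \<bar>c\<bar> * Nm y) \<and>
     (\<forall>y\<in>Rk k. \<forall>z\<in>Rk k. Nm (\<lambda>i. y i + z i) \<le> Nm y + Nm z)"

definition unit_ball_Y :: "nat \<Rightarrow> ((nat \<Rightarrow> real) \<Rightarrow> real) \<Rightarrow> (nat \<Rightarrow> real) set" where
  "unit_ball_Y k Nm = {y \<in> Rk k. Nm y \<le> 1}"

definition lip_maps :: "real \<Rightarrow> nat \<Rightarrow> ((nat \<Rightarrow> real) \<Rightarrow> real)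
    \<Rightarrow> ((nat \<Rightarrow> real) \<Rightarrow> (nat \<Rightarrow> real)) set" where
  "lip_maps \<gamma> k Nm = {\<Phi>. \<Phi> ` unit_ball_Y k Nm \<subseteq> c0 \<and>
     (\<forall>y\<in>unit_ball_Y k Nm. \<forall>y'\<in>unit_ball_Y k Nm.
        c0norm (\<lambda>i. \<Phi> y i - \<Phi> y' i) \<le> \<gamma> * Nm (\<lambda>i. y i - y' i))}"

definition dgamma :: "real \<Rightarrow> (nat \<Rightarrow> real) set \<Rightarrow> nat \<Rightarrow> ((nat \<Rightarrow> real) \<Rightarrow> real) \<Rightarrow> ereal" where
  "dgamma \<gamma> K k Nm = (INF \<Phi> \<in> lip_maps \<gamma> k Nm. SUP f \<in> K. INF y \<in> unit_ball_Y k Nm.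
      ereal (c0norm (\<lambda>i. f i - \<Phi> y i)))"

definition lip_width :: "real \<Rightarrow> nat \<Rightarrow> (nat \<Rightarrow> real) set \<Rightarrow> ereal" where
  "lip_width \<gamma> n K = (INF k \<in> {1..n}. INF Nm \<in> {Nm. is_norm_on k Nm}. dgamma \<gamma> K k Nm)"

definition Ksigma :: "(nat \<Rightarrow> real) \<Rightarrow> (nat \<Rightarrow> real) set" where
  "Ksigma \<sigma> = (\<lambda>j. (\<lambda>i. \<sigma> j * unitvec j i)) ` UNIV \<union> {(\<lambda>i. 0)}"

end

theory Submission
  imports Defs
begin

text \<open>Rescale by \<open>\<gamma>\<close> and pick centres \<open>c\<^sub>j\<close> in the cube \<open>[-1,1]\<^sup>n\<close> greedily, \<open>c\<^sub>j\<close> at sup-distance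
  at least \<open>\<tau>\<^sub>i/\<gamma>\<close> from every earlier \<open>c\<^sub>i\<close>: this is possible because the forbidden open cubes have
  total volume \<open>\<Sum> (2\<tau>\<^sub>i/\<gamma>)\<^sup>n \<le> 1\<close>, less than the volume of the cube. With \<open>\<tau>\<close> decreasing the centres
  are then \<open>\<tau>\<^sub>i/\<gamma>\<close>-separated, so the \<open>\<gamma>\<close>-Lipschitz map
  \<open>\<Phi>(y)\<^sub>j = max 0 (\<tau>\<^sub>j - \<gamma> \<parallel>y - c\<^sub>j\<parallel>\<^sub>\<infinity>)\<close> sends \<open>c\<^sub>j\<close> to \<open>\<tau>\<^sub>j e\<^sub>j\<close> and the corner \<open>(1,\<dots>,1)\<close> to \<open>0\<close>.
  Taking for \<open>\<tau>\<close> the sequence \<open>\<sigma>\<close> truncated after \<open>N\<close> terms gives the error \<open>\<sigma>\<^sub>N\<close>.\<close>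

definition max_norm :: "nat \<Rightarrow> (nat \<Rightarrow> real) \<Rightarrow> real" where
  "max_norm n y = Max (insert 0 ((\<lambda>l. \<bar>y l\<bar>) ` {..<n}))"

lemma abs_le_max_norm: "l < n \<Longrightarrow> \<bar>y l\<bar> \<le> max_norm n y"
  unfolding max_norm_def by (rule Max_ge) auto

lemma max_norm_nonneg: "0 \<le> max_norm n y"
  unfolding max_norm_def by (rule Max_ge) auto

lemma max_norm_le_iff: "0 \<le> c \<Longrightarrow> max_norm n y \<le> c \<longleftrightarrow> (\<forall>l<n. \<bar>y l\<bar> \<le> c)"
  unfolding max_norm_def by (subst Max_le_iff) auto

lemma max_norm_less_iff: "0 < c \<Longrightarrow> max_norm n y < c \<longleftrightarrow> (\<forall>l<n. \<bar>y l\<bar> < c)"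
  unfolding max_norm_def by (subst Max_less_iff) auto

lemma max_norm_zero [simp]: "max_norm n (\<lambda>l. 0) = 0"
  using max_norm_le_iff[of 0 n "\<lambda>l. 0"] max_norm_nonneg[of n "\<lambda>l. 0"] by simp

lemma max_norm_triangle: "max_norm n (\<lambda>l. y l + z l) \<le> max_norm n y + max_norm n z"
  using abs_le_max_norm[of _ n y] abs_le_max_norm[of _ n z] max_norm_nonneg[of n y] max_norm_nonneg[of n z]
  by (subst max_norm_le_iff) (auto intro: abs_triangle_ineq[THEN order.trans] add_mono)

lemma max_norm_scale: "max_norm n (\<lambda>l. c * y l) = \<bar>c\<bar> * max_norm n y"
proof -
  have "\<bar>c\<bar> * max_norm n y = Max ((*) \<bar>c\<bar> ` insert 0 ((\<lambda>l. \<bar>y l\<bar>) ` {..<n}))"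
    unfolding max_norm_def by (rule mono_Max_commute) (auto simp: mono_def mult_left_mono)
  also have "\<dots> = max_norm n (\<lambda>l. c * y l)"
    unfolding max_norm_def by (simp add: image_image abs_mult)
  finally show ?thesis by (rule sym)
qed

lemma max_norm_minus_commute: "max_norm n (\<lambda>l. y l - z l) = max_norm n (\<lambda>l. z l - y l)"
  unfolding max_norm_def by (simp add: abs_minus_commute)

lemma abs_max_norm_diff_le:
  "\<bar>max_norm n (\<lambda>l. y l - c l) - max_norm n (\<lambda>l. z l - c l)\<bar> \<le> max_norm n (\<lambda>l. y l - z l)"
  using max_norm_triangle[of n "\<lambda>l. y l - z l" "\<lambda>l. z l - c l"]
    max_norm_triangle[of n "\<lambda>l. z l - y l" "\<lambda>l. y l - c l"]
    max_norm_minus_commute[of n y z]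
  by simp

lemma is_norm_on_max_norm: "is_norm_on n (max_norm n)"
  unfolding is_norm_on_def
proof (intro conjI ballI allI)
  fix y assume y: "y \<in> Rk n"
  show "max_norm n y = 0 \<longleftrightarrow> y = (\<lambda>i. 0)"
  proof
    assume "max_norm n y = 0"
    then have "y l = 0" for l
      using y abs_le_max_norm[of l n y] by (cases "l < n") (auto simp: Rk_def)
    then show "y = (\<lambda>i. 0)" by (rule ext)
  qed simp
qed (simp_all add: max_norm_nonneg max_norm_scale max_norm_triangle)

lemma cube_not_covered_by_cubes:
  fixes p :: "nat \<Rightarrow> nat \<Rightarrow> real" and r :: "nat \<Rightarrow> real"
  assumes fin: "finite I" and r_nonneg: "\<And>i. i \<in> I \<Longrightarrow> 0 \<le> r i" and ab: "a \<le> b"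
    and small: "(\<Sum>i\<in>I. (2 * r i) ^ n) < (b - a) ^ n"
  shows "\<exists>x\<in>Rk n. (\<forall>l<n. a \<le> x l \<and> x l \<le> b) \<and> (\<forall>i\<in>I. r i \<le> max_norm n (\<lambda>l. x l - p i l))"
proof (rule ccontr)
  assume uncovered: "\<not> ?thesis"
  interpret product_sigma_finite "\<lambda>_. lborel" by standard
  define M where "M = PiM {..<n} (\<lambda>_. lborel::real measure)"
  define Q where "Q = PiE {..<n} (\<lambda>_. {a..b})"
  define C where "C i = PiE {..<n} (\<lambda>l. {p i l - r i <..< p i l + r i})" for i
  have "Q \<subseteq> (\<Union>i\<in>I. C i)"
  proof
    fix x assume x: "x \<in> Q"
    define x' where "x' = (\<lambda>l. if l < n then x l else 0)"
    have "x' \<in> Rk n" "\<forall>l<n. a \<le> x' l \<and> x' l \<le> b"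
      using x by (auto simp: x'_def Rk_def Q_def)
    with uncovered obtain i where i: "i \<in> I" "max_norm n (\<lambda>l. x' l - p i l) < r i"
      by (meson not_le)
    have "0 < r i"
      using i(2) max_norm_nonneg[of n "\<lambda>l. x' l - p i l"] by linarith
    then have "\<forall>l<n. \<bar>x l - p i l\<bar> < r i"
      using i(2) by (auto simp: max_norm_less_iff x'_def)
    with x have "x \<in> C i"
      by (auto simp: Q_def C_def PiE_def Pi_def abs_less_iff)
    with i(1) show "x \<in> (\<Union>i\<in>I. C i)" by blast
  qed
  then have "emeasure M Q \<le> emeasure M (\<Union>i\<in>I. C i)"
    by (rule emeasure_mono) (auto simp: M_def C_def intro!: sets.finite_UN fin)
  also have "\<dots> \<le> (\<Sum>i\<in>I. emeasure M (C i))"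
    by (rule emeasure_subadditive_finite[OF fin]) (auto simp: M_def C_def)
  also have "\<dots> = (\<Sum>i\<in>I. ennreal ((2 * r i) ^ n))"
  proof (rule sum.cong)
    fix i assume "i \<in> I"
    then show "emeasure M (C i) = ennreal ((2 * r i) ^ n)"
      unfolding M_def C_def using r_nonneg by (subst emeasure_PiM) (auto simp: ennreal_power)
  qed simp
  also have "\<dots> = ennreal (\<Sum>i\<in>I. (2 * r i) ^ n)"
    using r_nonneg by (intro sum_ennreal) auto
  finally have "emeasure M Q \<le> ennreal (\<Sum>i\<in>I. (2 * r i) ^ n)" .
  moreover have "emeasure M Q = ennreal ((b - a) ^ n)"
    unfolding M_def Q_def using ab by (subst emeasure_PiM) (auto simp: ennreal_power)
  ultimately have "(b - a) ^ n \<le> (\<Sum>i\<in>I. (2 * r i) ^ n)"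
    using r_nonneg by (simp add: ennreal_le_iff sum_nonneg)
  with small show False by simp
qed

lemma separated_points_in_cube:
  fixes t :: "nat \<Rightarrow> real"
  assumes n: "n \<ge> 1" and t_nonneg: "\<And>j. 0 \<le> t j"
    and t_sum: "\<And>J. (\<Sum>j<J. (2 * t j) ^ n) \<le> 1"
  obtains c :: "nat \<Rightarrow> nat \<Rightarrow> real"
  where "\<And>j. c j \<in> Rk n" and "\<And>j l. l < n \<Longrightarrow> -1 \<le> c j l \<and> c j l \<le> 1 - t j"
    and "\<And>i j. i < j \<Longrightarrow> t i \<le> max_norm n (\<lambda>l. c j l - c i l)"
proof -
  define admissible where "admissible c j x \<longleftrightarrow> x \<in> Rk n \<and> (\<forall>l<n. -1 \<le> x l \<and> x l \<le> 1 - t j)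
      \<and> (\<forall>i<j. t i \<le> max_norm n (\<lambda>l. x l - c i l))" for c :: "nat \<Rightarrow> nat \<Rightarrow> real" and j x
  have "\<exists>x. admissible c j x" for c j
  proof -
    have "(\<Sum>i<Suc j. (2 * t i) ^ n) = (\<Sum>i<j. (2 * t i) ^ n) + (2 * t j) ^ n"
      by (rule sum.lessThan_Suc)
    moreover have "0 \<le> (\<Sum>i<j. (2 * t i) ^ n)"
      using t_nonneg by (intro sum_nonneg) simp
    ultimately have "(2 * t j) ^ n \<le> 1"
      using t_sum[of "Suc j"] by linarith
    then have small: "2 * t j \<le> 1"
      using t_nonneg[of j] n by (subst (asm) power_le_one_iff) auto
    have "(3 / 2 :: real) \<le> (3 / 2) ^ n"
      using n by (intro self_le_power) auto
    also have "\<dots> \<le> (1 - t j - -1) ^ n"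
      using small t_nonneg[of j] by (intro power_mono) auto
    finally have "(\<Sum>i<j. (2 * t i) ^ n) < (1 - t j - -1) ^ n"
      using t_sum[of j] by simp
    then show ?thesis
      using cube_not_covered_by_cubes[of "{..<j}" t "-1" "1 - t j" n c] t_nonneg small
      unfolding admissible_def by auto
  qed
  then have "\<exists>c. \<forall>j. admissible c j (c j)"
    by (intro dependent_wf_choice[OF wf_less]) (auto simp: admissible_def)
  then show thesis
    using that unfolding admissible_def by blast
qed

definition bump_map :: "real \<Rightarrow> nat \<Rightarrow> (nat \<Rightarrow> real) \<Rightarrow> (nat \<Rightarrow> nat \<Rightarrow> real)
    \<Rightarrow> (nat \<Rightarrow> real) \<Rightarrow> nat \<Rightarrow> real" where
  "bump_map \<gamma> n \<tau> c y j = max 0 (\<tau> j - \<gamma> * max_norm n (\<lambda>l. y l - c j l))"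

lemma bump_map_eq_0: "\<tau> j \<le> \<gamma> * max_norm n (\<lambda>l. y l - c j l) \<Longrightarrow> bump_map \<gamma> n \<tau> c y j = 0"
  by (simp add: bump_map_def)

lemma bump_map_at_separated_center:
  assumes "0 \<le> \<tau> j" and "\<And>i. i \<noteq> j \<Longrightarrow> \<tau> i \<le> \<gamma> * max_norm n (\<lambda>l. c j l - c i l)"
  shows "bump_map \<gamma> n \<tau> c (c j) = (\<lambda>i. \<tau> j * unitvec j i)"
  using assms by (auto simp: bump_map_def unitvec_def)

lemma c0norm_le: "(\<And>j. \<bar>x j\<bar> \<le> B) \<Longrightarrow> c0norm x \<le> B"
  unfolding c0norm_def by (rule cSUP_least) auto

lemma bump_map_in_lip_maps:
  assumes \<gamma>: "0 \<le> \<gamma>" and \<tau>_nonneg: "\<And>j. 0 \<le> \<tau> j" and \<tau>_lim: "\<tau> \<longlonglongrightarrow> 0"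
  shows "bump_map \<gamma> n \<tau> c \<in> lip_maps \<gamma> n (max_norm n)"
proof -
  have "bump_map \<gamma> n \<tau> c y \<in> c0" for y
    unfolding c0_def mem_Collect_eq using \<gamma> \<tau>_nonneg
    by (intro tendsto_sandwich[OF _ _ tendsto_const \<tau>_lim])
       (auto simp: bump_map_def max_norm_nonneg)
  moreover have "c0norm (\<lambda>j. bump_map \<gamma> n \<tau> c y j - bump_map \<gamma> n \<tau> c z j)
      \<le> \<gamma> * max_norm n (\<lambda>l. y l - z l)" for y z
  proof (rule c0norm_le)
    fix j
    have max_0_lipschitz: "\<bar>max 0 p - max 0 q\<bar> \<le> \<bar>p - q\<bar>" for p q :: real
      by (auto simp: max_def)
    have "\<bar>bump_map \<gamma> n \<tau> c y j - bump_map \<gamma> n \<tau> c z j\<bar>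
        \<le> \<bar>(\<tau> j - \<gamma> * max_norm n (\<lambda>l. y l - c j l)) - (\<tau> j - \<gamma> * max_norm n (\<lambda>l. z l - c j l))\<bar>"
      unfolding bump_map_def by (rule max_0_lipschitz)
    also have "\<dots> = \<gamma> * \<bar>max_norm n (\<lambda>l. y l - c j l) - max_norm n (\<lambda>l. z l - c j l)\<bar>"
      using \<gamma> by (simp add: abs_mult right_diff_distrib[symmetric] abs_minus_commute)
    also have "\<dots> \<le> \<gamma> * max_norm n (\<lambda>l. y l - z l)"
      using \<gamma> by (intro mult_left_mono abs_max_norm_diff_le)
    finally show "\<bar>bump_map \<gamma> n \<tau> c y j - bump_map \<gamma> n \<tau> c z j\<bar> \<le> \<gamma> * max_norm n (\<lambda>l. y l - z l)" .
  qed
  ultimately show ?thesis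
    unfolding lip_maps_def by auto
qed

lemma dgamma_le:
  assumes "\<Phi> \<in> lip_maps \<gamma> k Nm"
    and "\<And>f. f \<in> K \<Longrightarrow> \<exists>y\<in>unit_ball_Y k Nm. c0norm (\<lambda>i. f i - \<Phi> y i) \<le> B"
  shows "dgamma \<gamma> K k Nm \<le> ereal B"
  unfolding dgamma_def
proof (rule INF_lower2[OF assms(1)], rule SUP_least)
  fix f assume "f \<in> K"
  then obtain y where "y \<in> unit_ball_Y k Nm" "c0norm (\<lambda>i. f i - \<Phi> y i) \<le> B"
    using assms(2) by blast
  then show "(INF y\<in>unit_ball_Y k Nm. ereal (c0norm (\<lambda>i. f i - \<Phi> y i))) \<le> ereal B"
    by (intro INF_lower2) auto
qed

lemma dgamma_Ksigma_le:
  assumes "\<Phi> \<in> lip_maps \<gamma> k Nm"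
    and "\<And>j. \<exists>y\<in>unit_ball_Y k Nm. \<Phi> y = (\<lambda>i. \<tau> j * unitvec j i)"
    and "\<exists>y\<in>unit_ball_Y k Nm. \<Phi> y = (\<lambda>i. 0)"
    and "\<And>j. \<bar>\<sigma> j - \<tau> j\<bar> \<le> B" and "0 \<le> B"
  shows "dgamma \<gamma> (Ksigma \<sigma>) k Nm \<le> ereal B"
proof (rule dgamma_le[OF assms(1)])
  fix f assume "f \<in> Ksigma \<sigma>"
  then consider j where "f = (\<lambda>i. \<sigma> j * unitvec j i)" | "f = (\<lambda>i. 0)"
    unfolding Ksigma_def by blast
  then show "\<exists>y\<in>unit_ball_Y k Nm. c0norm (\<lambda>i. f i - \<Phi> y i) \<le> B"
  proof cases
    case (1 j)
    obtain y where "y \<in> unit_ball_Y k Nm" "\<Phi> y = (\<lambda>i. \<tau> j * unitvec j i)"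
      using assms(2) by blast
    with 1 assms(4,5) show ?thesis
      by (intro bexI[of _ y] c0norm_le) (simp_all add: unitvec_def)
  next
    case 2
    obtain y where "y \<in> unit_ball_Y k Nm" "\<Phi> y = (\<lambda>i. 0)"
      using assms(3) by blast
    with 2 assms(5) show ?thesis
      by (intro bexI[of _ y] c0norm_le) simp_all
  qed
qed

lemma lip_width_le_dgamma:
  assumes "1 \<le> k" and "k \<le> n" and "is_norm_on k Nm"
  shows "lip_width \<gamma> n K \<le> dgamma \<gamma> K k Nm"
  unfolding lip_width_def using assms by (intro INF_lower2[of k] INF_lower) auto

lemma separated_centers_in_unit_ball:
  fixes \<tau> :: "nat \<Rightarrow> real"
  assumes n: "n \<ge> 1" and \<gamma>: "\<gamma> > 0"
    and \<tau>_nonneg: "\<And>j. 0 \<le> \<tau> j" and \<tau>_dec: "decseq \<tau>"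
    and \<tau>_sum: "\<And>J. (\<Sum>j<J. \<tau> j ^ n) \<le> (\<gamma> / 2) ^ n"
  obtains c :: "nat \<Rightarrow> nat \<Rightarrow> real"
  where "\<And>j. c j \<in> unit_ball_Y n (max_norm n)" and "\<And>j l. l < n \<Longrightarrow> c j l \<le> 1 - \<tau> j / \<gamma>"
    and "\<And>i j. i \<noteq> j \<Longrightarrow> \<tau> i \<le> \<gamma> * max_norm n (\<lambda>l. c j l - c i l)"
proof -
  have "(\<Sum>j<J. (2 * (\<tau> j / \<gamma>)) ^ n) \<le> 1" for J
  proof -
    have "(\<Sum>j<J. (2 * (\<tau> j / \<gamma>)) ^ n) = (2 / \<gamma>) ^ n * (\<Sum>j<J. \<tau> j ^ n)"
      by (simp add: sum_distrib_left power_mult_distrib[symmetric])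
    also have "\<dots> \<le> (2 / \<gamma>) ^ n * (\<gamma> / 2) ^ n"
      using \<tau>_sum \<gamma> by (intro mult_left_mono) auto
    also have "\<dots> = 1"
      using \<gamma> by (simp add: power_mult_distrib[symmetric])
    finally show ?thesis .
  qed
  then obtain c where c_Rk: "\<And>j. c j \<in> Rk n"
    and c_cube: "\<And>j l. l < n \<Longrightarrow> -1 \<le> c j l \<and> c j l \<le> 1 - \<tau> j / \<gamma>"
    and c_sep: "\<And>i j. i < j \<Longrightarrow> \<tau> i / \<gamma> \<le> max_norm n (\<lambda>l. c j l - c i l)"
    using separated_points_in_cube[OF n, of "\<lambda>j. \<tau> j / \<gamma>"] \<tau>_nonneg \<gamma> by auto
  have "c j \<in> unit_ball_Y n (max_norm n)" for j
  proof -
    have "0 \<le> \<tau> j / \<gamma>" using \<tau>_nonneg \<gamma> by simp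
    then have "\<bar>c j l\<bar> \<le> 1" if "l < n" for l
      using c_cube[OF that, of j] by (simp add: abs_le_iff)
    then show ?thesis
      using c_Rk[of j] by (simp add: unit_ball_Y_def max_norm_le_iff)
  qed
  moreover have "\<tau> i \<le> \<gamma> * max_norm n (\<lambda>l. c j l - c i l)" if "i \<noteq> j" for i j
  proof (cases "i < j")
    case True
    then show ?thesis using c_sep[of i j] \<gamma> by (simp add: field_simps)
  next
    case False
    then have "\<tau> i \<le> \<tau> j" using that \<tau>_dec by (simp add: decseq_def)
    also have "\<dots> \<le> \<gamma> * max_norm n (\<lambda>l. c j l - c i l)"
      using False that c_sep[of j i] max_norm_minus_commute[of n "c i" "c j"] \<gamma>
      by (simp add: field_simps)
    finally show ?thesis .
  qed
  ultimately show thesis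
    using that c_cube by blast
qed

lemma lip_width_Ksigma_le:
  fixes \<sigma> \<tau> :: "nat \<Rightarrow> real"
  assumes n: "n \<ge> 1" and \<gamma>: "\<gamma> > 0"
    and \<tau>_nonneg: "\<And>j. 0 \<le> \<tau> j" and \<tau>_dec: "decseq \<tau>" and \<tau>_lim: "\<tau> \<longlonglongrightarrow> 0"
    and \<tau>_sum: "\<And>J. (\<Sum>j<J. \<tau> j ^ n) \<le> (\<gamma> / 2) ^ n"
    and \<sigma>_\<tau>: "\<And>j. \<bar>\<sigma> j - \<tau> j\<bar> \<le> B" and B: "0 \<le> B"
  shows "lip_width \<gamma> n (Ksigma \<sigma>) \<le> ereal B"
proof -
  obtain c where c_ball: "\<And>j. c j \<in> unit_ball_Y n (max_norm n)"
    and c_below: "\<And>j l. l < n \<Longrightarrow> c j l \<le> 1 - \<tau> j / \<gamma>"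
    and c_sep: "\<And>i j. i \<noteq> j \<Longrightarrow> \<tau> i \<le> \<gamma> * max_norm n (\<lambda>l. c j l - c i l)"
    using separated_centers_in_unit_ball[OF n \<gamma> \<tau>_nonneg \<tau>_dec \<tau>_sum] by blast
  have at_center: "bump_map \<gamma> n \<tau> c (c j) = (\<lambda>i. \<tau> j * unitvec j i)" for j
    by (rule bump_map_at_separated_center[OF \<tau>_nonneg c_sep])
  define corner :: "nat \<Rightarrow> real" where "corner l = (if l < n then 1 else 0)" for l
  have corner_ball: "corner \<in> unit_ball_Y n (max_norm n)"
    by (auto simp: unit_ball_Y_def Rk_def corner_def max_norm_le_iff)
  have "bump_map \<gamma> n \<tau> c corner = (\<lambda>i. 0)"
  proof
    fix i
    have "\<tau> i / \<gamma> \<le> 1 - c i 0"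
      using c_below[of 0 i] n by simp
    also have "\<dots> \<le> \<bar>corner 0 - c i 0\<bar>"
      using n by (simp add: corner_def)
    also have "\<dots> \<le> max_norm n (\<lambda>l. corner l - c i l)"
      using n by (intro abs_le_max_norm) simp
    finally show "bump_map \<gamma> n \<tau> c corner i = 0"
      using \<gamma> by (intro bump_map_eq_0) (simp add: field_simps)
  qed
  then have "dgamma \<gamma> (Ksigma \<sigma>) n (max_norm n) \<le> ereal B"
    using at_center c_ball corner_ball \<sigma>_\<tau> B \<gamma> \<tau>_nonneg \<tau>_lim
    by (intro dgamma_Ksigma_le[of "bump_map \<gamma> n \<tau> c"] bump_map_in_lip_maps) auto
  moreover have "lip_width \<gamma> n (Ksigma \<sigma>) \<le> dgamma \<gamma> (Ksigma \<sigma>) n (max_norm n)"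
    using n by (intro lip_width_le_dgamma is_norm_on_max_norm) auto
  ultimately show ?thesis by (rule order.trans[rotated])
qed

lemma lip_width_Ksigma_le_truncation:
  fixes \<sigma> :: "nat \<Rightarrow> real"
  assumes n: "n \<ge> 1" and \<gamma>: "\<gamma> > 0"
    and \<sigma>_nonneg: "\<And>j. 0 \<le> \<sigma> j" and \<sigma>_dec: "decseq \<sigma>" and \<sigma>_lim: "\<sigma> \<longlonglongrightarrow> 0"
    and N: "N \<ge> 1" and \<sigma>_sum: "(\<Sum>j<N. \<sigma> j ^ n) \<le> (\<gamma> / 2) ^ n"
  shows "lip_width \<gamma> n (Ksigma \<sigma>) \<le> ereal (\<sigma> (N - 1))"
proof (rule lip_width_Ksigma_le[OF n \<gamma>])
  define \<tau> where "\<tau> j = (if j < N then \<sigma> j else 0)" for j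
  show "0 \<le> \<tau> j" for j
    using \<sigma>_nonneg by (simp add: \<tau>_def)
  show "decseq \<tau>"
    using \<sigma>_nonneg \<sigma>_dec by (auto simp: decseq_def \<tau>_def)
  show "\<tau> \<longlonglongrightarrow> 0"
    by (rule tendsto_sandwich[OF _ _ tendsto_const \<sigma>_lim]) (auto simp: \<tau>_def \<sigma>_nonneg)
  show "(\<Sum>j<J. \<tau> j ^ n) \<le> (\<gamma> / 2) ^ n" for J
  proof -
    have "(\<Sum>j<J. \<tau> j ^ n) = (\<Sum>j\<in>{..<J} \<inter> {..<N}. \<sigma> j ^ n)"
      unfolding sum.inter_restrict[OF finite_lessThan] using n by (intro sum.cong) (auto simp: \<tau>_def)
    also have "\<dots> \<le> (\<Sum>j<N. \<sigma> j ^ n)"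
      using \<sigma>_nonneg by (intro sum_mono2) auto
    finally show ?thesis using \<sigma>_sum by linarith
  qed
  show "\<bar>\<sigma> j - \<tau> j\<bar> \<le> \<sigma> (N - 1)" for j
    using \<sigma>_nonneg[of j] \<sigma>_nonneg[of "N - 1"] \<sigma>_dec N by (auto simp: \<tau>_def decseq_def)
  show "0 \<le> \<sigma> (N - 1)"
    by (rule \<sigma>_nonneg)
qed

theorem lemma4p9:
  fixes \<sigma> :: "nat \<Rightarrow> real" and n :: nat and \<gamma> :: real
  assumes dec: "\<And>j. \<sigma> (Suc j) < \<sigma> j"
    and lim: "\<sigma> \<longlonglongrightarrow> 0"
    and n: "n \<ge> 1"
    and gam: "\<gamma> > 0"
    and first: "\<sigma> 0 \<le> \<gamma> / 2"
  shows "(\<forall>N::nat. N \<ge> 1 \<longrightarrow> (\<Sum>j<N. \<sigma> j ^ n) \<le> (\<gamma> / 2) ^ n \<longrightarrow>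
            lip_width \<gamma> n (Ksigma \<sigma>) \<le> ereal (\<sigma> (N - 1)))
       \<and> (summable (\<lambda>j. \<sigma> j ^ n) \<and> (\<Sum>j. \<sigma> j ^ n) \<le> (\<gamma> / 2) ^ n \<longrightarrow>
            lip_width \<gamma> n (Ksigma \<sigma>) \<le> 0)"
proof (intro conjI allI impI)
  have \<sigma>_dec: "decseq \<sigma>"
    using dec by (intro decseq_SucI less_imp_le)
  have \<sigma>_nonneg: "0 \<le> \<sigma> j" for j
    using decseq_ge[OF \<sigma>_dec lim] .
  show "lip_width \<gamma> n (Ksigma \<sigma>) \<le> ereal (\<sigma> (N - 1))"
    if "N \<ge> 1" and "(\<Sum>j<N. \<sigma> j ^ n) \<le> (\<gamma> / 2) ^ n" for N
    using lip_width_Ksigma_le_truncation[OF n gam \<sigma>_nonneg \<sigma>_dec lim that] .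
  assume "summable (\<lambda>j. \<sigma> j ^ n) \<and> (\<Sum>j. \<sigma> j ^ n) \<le> (\<gamma> / 2) ^ n"
  then have "(\<Sum>j<J. \<sigma> j ^ n) \<le> (\<gamma> / 2) ^ n" for J
    using sum_le_suminf[of "\<lambda>j. \<sigma> j ^ n" "{..<J}"] \<sigma>_nonneg by force
  then have "lip_width \<gamma> n (Ksigma \<sigma>) \<le> ereal 0"
    using \<sigma>_nonneg by (intro lip_width_Ksigma_le[OF n gam _ \<sigma>_dec lim]) auto
  then show "lip_width \<gamma> n (Ksigma \<sigma>) \<le> 0"
    by (simp add: zero_ereal_def)
qed

end
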